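(* Let $n\ge 1$ and let $A\in\mathbb{C}^{2^n\times 2^n}$ be a matrix represented by a dictionary data structure with $s_0\ge 1$ data items, i.e. there are non-zero complex numbers $A_0,\dots,A_{s_0-1}$ (data values), sets $S_c(l)\subseteq[0,2^n-1]$ and injective maps $c_l:S_c(l)\to[0,2^n-1]$ ($l\in[0,s_0-1]$) such that the pairs $(c_l(j),j)$, $l\in[0,s_0-1]$, $j\in S_c(l)$, are pairwise distinct and $$A=\sum_{l=0}^{s_0-1}\sum_{j\in S_c(l)}A_l\,\ket{c_l(j)}\bra{j}.$$ Let $m=\lceil\log_2 s_0\rceil$. Consider registers idx ($m$ qubits), del ($1$ qubit) and a system register ($n$ qubits). Suppose $O_c$ is a unitary on idx$\otimes$del$\otimes$system such that for all $l\in[0,2^m-1]$, $j\in[0,2^n-1]$, $$O_c\ket{l}_{\rm idx}\ket{0}_{\rm del}\ket{j}=\begin{cases}\ket{l}_{\rm idx}\ket{0}_{\rm del}\ket{c_l(j)}, & \text{if } l\in[0,s_0-1]\text{ and } j\in S_c(l),\\ \ket{l}_{\rm idx}\ket{1}_{\rm del}\ket{j}, & \text{if } l\in[s_0,2^m-1]\text{ or } j\notin S_c(l),\end{cases}$$ and suppose $\mathrm{PREP},\mathrm{UNPREP}$ are unitaries on the $m$-qubit register idx with $$\mathrm{PREP}\ket{0}^{\otimes m}=\frac{1}{\sqrt{\sum_{l=0}^{s_0-1}|A_l|}}\sum_{l=0}^{s_0-1}\sqrt{A_l}\,\ket{l},\qquad \mathrm{UNPREP}^{\dagger}\ket{0}^{\otimes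 m}=\frac{1}{\sqrt{\sum_{l=0}^{s_0-1}|A_l|}}\sum_{l=0}^{s_0-1}\big(\sqrt{A_l}\big)^{*}\ket{l}.$$ Then $U_A=(\mathrm{UNPREP}\otimes I_{2^{n+1}})\,O_c\,(\mathrm{PREP}\otimes I_{2^{n+1}})$ is a block encoding of $A$ with subnormalization $\alpha=\sum_{l=0}^{s_0-1}|A_l|$, i.e. $$\big(\bra{0}^{\otimes m}_{\rm idx}\bra{0}_{\rm del}\otimes I_{2^n}\big)\,U_A\,\big(\ket{0}^{\otimes m}_{\rm idx}\ket{0}_{\rm del}\otimes I_{2^n}\big)=\frac{A}{\alpha}.$$
   Context: For a complex number $c=|c|e^{\imath\theta}$ (with $\theta$ its argument), the square root is defined as $\sqrt{c}=\sqrt{|c|}\,e^{\imath\theta/2}$; $(\cdot)^*$ denotes complex conjugation. $[a,b]=\{a,a+1,\dots,b\}$. $\ket{j}$ denotes the computational basis state encoding the binary representation of the integer $j$; $I_N$ is the $N\times N$ identity. *)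

theory Defs
  imports "Jordan_Normal_Form.Schur_Decomposition"
begin

definition unitary_mat :: "nat \<Rightarrow> complex mat \<Rightarrow> bool" where
  "unitary_mat N U \<longleftrightarrow> U \<in> carrier_mat N N \<and>
     mat_adjoint U * U = 1\<^sub>m N \<and> U * mat_adjoint U = 1\<^sub>m N"

text \<open>Kronecker product U \<otimes> I_k (U acts on the most significant factor).\<close>
definition kron_id :: "complex mat \<Rightarrow> nat \<Rightarrow> complex mat" where
  "kron_id U k = mat (dim_row U * k) (dim_col U * k)
     (\<lambda>(i,j). if i mod k = j mod k then U $$ (i div k, j div k) else 0)"

abbreviation ket :: "nat \<Rightarrow> nat \<Rightarrow> complex vec" where
  "ket N j \<equiv> unit_vec N j"

text \<open>The isometry |0...0>_anc \<otimes> I_d : C^d \<rightarrow> C^(a*d), ancilla register of dimension a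
  being the most significant factor.\<close>
definition anc_zero_iso :: "nat \<Rightarrow> nat \<Rightarrow> complex mat" where
  "anc_zero_iso a d = mat (a * d) d (\<lambda>(i,j). if i = j then 1 else 0)"

end

(*
  Write K = 2^(n+1) for the dimension of del (x) system.  Compressing with |0>_idx |0>_del
  keeps the top-left 2^n x 2^n block of U_A, whose (i, j) entry is
    sum over l', l of UNPREP(0, l') * O_c(l' K + i, l K + j) * PREP(l, 0).
  On the del = 0 subspace O_c maps |l,0,j> to |l,0,c_l(j)> when j is in S_c(l) and otherwise out
  of that subspace, so only the terms with l' = l, j in S_c(l) and i = c_l(j) survive, and each
  contributes sqrt(A_l)^2 / alpha = A_l / alpha: this is the dictionary entry A(i, j) / alpha.
  Only the shapes of O_c, PREP and UNPREP enter.
*)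
theory Submission
  imports Defs
begin

lemma mat_adjoint_index:
  fixes A :: "'a::conjugatable_field mat"
  shows "i < dim_col A \<Longrightarrow> j < dim_row A \<Longrightarrow>
           mat_adjoint A $$ (i, j) = conjugate (A $$ (j, i))"
    and "dim_row (mat_adjoint A) = dim_col A"
    and "dim_col (mat_adjoint A) = dim_row A"
  unfolding mat_adjoint_def by (auto simp: mat_of_rows_def)

lemma mat_adjoint_carrier:
  fixes A :: "'a::conjugatable_field mat"
  assumes "A \<in> carrier_mat nr nc"
  shows "mat_adjoint A \<in> carrier_mat nc nr"
  using assms by (intro carrier_matI) (simp_all only: mat_adjoint_index carrier_matD)

lemma mult_mat_vec_unit_vec_index:
  fixes A :: "'a::semiring_1 mat"
  assumes "A \<in> carrier_mat nr nc" "i < nr" "j < nc"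
  shows "(A *\<^sub>v unit_vec nc j) $ i = A $$ (i, j)"
  using assms by simp

lemma index_eq_if_mult_unit_vec:
  fixes A :: "'a::semiring_1 mat"
  assumes "A \<in> carrier_mat nr nc" "A *\<^sub>v unit_vec nc j = unit_vec nr k" "i < nr" "j < nc"
  shows "A $$ (i, j) = (if i = k then 1 else 0)"
proof -
  have "A $$ (i, j) = unit_vec nr k $ i"
    using assms by (simp flip: mult_mat_vec_unit_vec_index[OF assms(1,3,4)])
  then show ?thesis using assms(3) by (simp add: unit_vec_def)
qed

lemma mat_adjoint_mult_unit_vec_index:
  fixes U :: "'a::conjugatable_field mat"
  assumes U: "U \<in> carrier_mat N N" and "i < N" "j < N"
  shows "U $$ (j, i) = conjugate ((mat_adjoint U *\<^sub>v unit_vec N j) $ i)"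
proof -
  have dims: "dim_row U = N" "dim_col U = N" using U by auto
  have "(mat_adjoint U *\<^sub>v unit_vec N j) $ i = conjugate (U $$ (j, i))"
    using assms dims mat_adjoint_carrier[OF U]
    by (simp only: mult_mat_vec_unit_vec_index mat_adjoint_index)
  then show ?thesis by simp
qed

lemma mult_add_less_mult:
  fixes l a r K :: nat
  assumes "l < a" "r < K"
  shows "l * K + r < a * K"
proof -
  have "l * K + r < Suc l * K" using assms(2) by simp
  also have "\<dots> \<le> a * K" using assms(1) by (intro mult_le_mono1) simp
  finally show ?thesis .
qed

lemma mult_add_eq_mult_add_iff:
  fixes a b r t K :: nat
  assumes "r < K" "t < K"
  shows "a * K + r = b * K + t \<longleftrightarrow> a = b \<and> r = t"
proof
  assume "a * K + r = b * K + t"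
  then have "(a * K + r) div K = (b * K + t) div K" "(a * K + r) mod K = (b * K + t) mod K"
    by simp_all
  then show "a = b \<and> r = t" using assms by simp
qed simp

lemma sum_lessThan_mult_blocks:
  fixes f :: "nat \<Rightarrow> 'a::comm_monoid_add" and a K :: nat
  shows "(\<Sum>b < a * K. f b) = (\<Sum>l < a. \<Sum>r < K. f (l * K + r))"
proof -
  have "(\<Sum>b\<in>{l * K..<l * K + K}. f b) = (\<Sum>r < K. f (l * K + r))" for l
    by (rule sum.reindex_bij_witness[where i = "\<lambda>r. l * K + r" and j = "\<lambda>b. b - l * K"]) auto
  then show ?thesis by (simp flip: sum.nat_group)
qed

lemma atLeastAtMost_pred_eq_lessThan:
  fixes p :: nat
  assumes "0 < p"
  shows "{0..p - 1} = {..<p}"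
  using assms by auto

lemma le_two_pow_nat_ceiling_log:
  fixes s :: nat
  assumes "1 \<le> s"
  shows "s \<le> 2 ^ nat \<lceil>log 2 (real s)\<rceil>"
proof -
  define m where "m = nat \<lceil>log 2 (real s)\<rceil>"
  have "log 2 (real s) \<le> real m" unfolding m_def by linarith
  then have "real s \<le> 2 powr real m"
    using assms by (simp add: log_le_iff)
  then have "real s \<le> real (2 ^ m)" by (simp add: powr_realpow)
  then show ?thesis unfolding m_def by linarith
qed

lemma sum_outer_unit_vec_index:
  fixes x :: "'a::semiring_1"
  assumes "finite T" "i < N" "j < N"
  shows "(\<Sum>j'\<in>T. x * (unit_vec N (f j') $ i) * (unit_vec N j' $ j))
       = (if j \<in> T \<and> i = f j then x else 0)"
proof -
  have "(\<Sum>j'\<in>T. x * (unit_vec N (f j') $ i) * (unit_vec N j' $ j))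
      = (\<Sum>j'\<in>T. if j' = j then (if i = f j then x else 0) else 0)"
    using assms(2,3) by (intro sum.cong) (auto simp: unit_vec_def)
  then show ?thesis using assms(1) by (simp add: sum.delta')
qed

lemma dictionary_matrix_index:
  fixes x :: "nat \<Rightarrow> 'a::semiring_1"
  assumes "\<forall>l<s. finite (S l)" "i < N" "j < N"
  shows "(\<Sum>l<s. \<Sum>j'\<in>S l. x l * (unit_vec N (c l j') $ i) * (unit_vec N j' $ j))
       = (\<Sum>l<s. if j \<in> S l \<and> i = c l j then x l else 0)"
  using assms by (intro sum.cong) (simp_all add: sum_outer_unit_vec_index)

lemma kron_id_carrier:
  assumes "U \<in> carrier_mat a b"
  shows "kron_id U K \<in> carrier_mat (a * K) (b * K)"
  using assms by (simp add: kron_id_def)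

lemma kron_id_index_blocks:
  assumes "l < dim_row U" "l' < dim_col U" "r < K" "r' < K"
  shows "kron_id U K $$ (l * K + r, l' * K + r') = (if r = r' then U $$ (l, l') else 0)"
  using assms mult_add_less_mult[of l "dim_row U" r K] mult_add_less_mult[of l' "dim_col U" r' K]
  by (simp add: kron_id_def)

lemma kron_id_sandwich_index:
  assumes U: "U \<in> carrier_mat a a" and W: "W \<in> carrier_mat (a * K) (a * K)"
    and P: "P \<in> carrier_mat a a" and "0 < a" "i < K" "j < K"
  shows "(kron_id U K * W * kron_id P K) $$ (i, j)
       = (\<Sum>l'<a. \<Sum>l<a. U $$ (0, l') * W $$ (l' * K + i, l * K + j) * P $$ (l, 0))"
proof -
  have kU: "kron_id U K \<in> carrier_mat (a * K) (a * K)"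
    and kP: "kron_id P K \<in> carrier_mat (a * K) (a * K)"
    using U P by (simp_all add: kron_id_carrier)
  have "i < a * K" "j < a * K"
    using \<open>0 < a\<close> \<open>i < K\<close> \<open>j < K\<close> mult_add_less_mult[of 0 a] by simp_all
  have kU_row: "kron_id U K $$ (i, l' * K + r) = (if i = r then U $$ (0, l') else 0)"
    if "l' < a" "r < K" for l' r
    using kron_id_index_blocks[of 0 U l' i K r] U that \<open>0 < a\<close> \<open>i < K\<close> by simp
  have kP_col: "kron_id P K $$ (l * K + t, j) = (if t = j then P $$ (l, 0) else 0)"
    if "l < a" "t < K" for l t
    using kron_id_index_blocks[of l P 0 t K j] P that \<open>0 < a\<close> \<open>j < K\<close> by simp
  have "(kron_id U K * W * kron_id P K) $$ (i, j)
      = (\<Sum>c<a * K. kron_id U K $$ (i, c) * (\<Sum>b<a * K. W $$ (c, b) * kron_id P K $$ (b, j)))"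
    using kU W kP \<open>i < a * K\<close> \<open>j < a * K\<close> by (simp add: scalar_prod_def atLeast0LessThan)
  also have "\<dots> = (\<Sum>l'<a. \<Sum>r<K. kron_id U K $$ (i, l' * K + r)
                   * (\<Sum>l<a. \<Sum>t<K. W $$ (l' * K + r, l * K + t) * kron_id P K $$ (l * K + t, j)))"
    by (simp only: sum_lessThan_mult_blocks)
  also have "\<dots> = (\<Sum>l'<a. U $$ (0, l') * (\<Sum>l<a. W $$ (l' * K + i, l * K + j) * P $$ (l, 0)))"
    using \<open>i < K\<close> \<open>j < K\<close>
    by (simp add: kU_row kP_col if_distrib[where f = "\<lambda>x. x * y" for y]
        if_distrib[where f = "\<lambda>x. y * x" for y] cong: if_cong)
  also have "\<dots> = (\<Sum>l'<a. \<Sum>l<a. U $$ (0, l') * W $$ (l' * K + i, l * K + j) * P $$ (l, 0))"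
    by (simp add: sum_distrib_left mult.assoc)
  finally show ?thesis .
qed

lemma anc_zero_iso_compression:
  fixes M :: "complex mat"
  assumes M: "M \<in> carrier_mat (a * d) (a * d)" and "0 < a"
  shows "mat_adjoint (anc_zero_iso a d) * M * anc_zero_iso a d = mat d d (\<lambda>(i, j). M $$ (i, j))"
proof -
  let ?V = "anc_zero_iso a d"
  have V: "?V \<in> carrier_mat (a * d) d" by (simp add: anc_zero_iso_def)
  have Vh: "mat_adjoint ?V \<in> carrier_mat d (a * d)"
    using V by (rule mat_adjoint_carrier)
  have "d \<le> a * d" using \<open>0 < a\<close> by simp
  have col_V: "col ?V j = unit_vec (a * d) j" if "j < d" for j
    using that \<open>d \<le> a * d\<close> by (intro eq_vecI) (auto simp: anc_zero_iso_def unit_vec_def)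
  have row_Vh: "row (mat_adjoint ?V) i = unit_vec (a * d) i" if "i < d" for i
    using that \<open>d \<le> a * d\<close> V
    by (intro eq_vecI) (auto simp: anc_zero_iso_def mat_adjoint_index unit_vec_def)
  have entry: "(mat_adjoint ?V * M * ?V) $$ (i, j) = M $$ (i, j)" if ij: "i < d" "j < d" for i j
  proof -
    have "i < a * d" "j < a * d" using ij \<open>d \<le> a * d\<close> by (meson order.strict_trans2)+
    have "(mat_adjoint ?V * M * ?V) $$ (i, j) = (mat_adjoint ?V * (M * ?V)) $$ (i, j)"
      using M V Vh by (simp add: assoc_mult_mat)
    also have "\<dots> = unit_vec (a * d) i \<bullet> col (M * ?V) j"
      using M V Vh ij by (simp add: row_Vh)
    also have "\<dots> = (M * ?V) $$ (i, j)"
      using M V ij \<open>i < a * d\<close> by simp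
    also have "\<dots> = row M i \<bullet> unit_vec (a * d) j"
      using M V ij \<open>i < a * d\<close> by (simp add: col_V)
    also have "\<dots> = M $$ (i, j)"
      using M \<open>i < a * d\<close> \<open>j < a * d\<close> by simp
    finally show ?thesis .
  qed
  show ?thesis
    by (rule eq_matI) (use M V Vh entry in auto)
qed

text \<open>The basis index \<open>l * (2 * d) + b * d + j\<close> stands for \<open>|l>|b>|j>\<close> on idx, del and system;
  only inputs with \<open>b = 0\<close> are constrained.\<close>
definition select_oracle ::
    "nat \<Rightarrow> nat \<Rightarrow> (nat \<Rightarrow> nat \<Rightarrow> bool) \<Rightarrow> (nat \<Rightarrow> nat \<Rightarrow> nat) \<Rightarrow> 'a::semiring_1 mat \<Rightarrow> bool"
  where "select_oracle a d Q f W \<longleftrightarrow>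
    W \<in> carrier_mat (a * (2 * d)) (a * (2 * d)) \<and>
    (\<forall>l<a. \<forall>j<d. Q l j \<longrightarrow> f l j < d) \<and>
    (\<forall>l<a. \<forall>j<d. W *\<^sub>v unit_vec (a * (2 * d)) (l * (2 * d) + j) =
       (if Q l j then unit_vec (a * (2 * d)) (l * (2 * d) + f l j)
        else unit_vec (a * (2 * d)) (l * (2 * d) + d + j)))"

lemma select_oracle_index:
  assumes "select_oracle a d Q f W" "l' < a" "i < d" "l < a" "j < d"
  shows "W $$ (l' * (2 * d) + i, l * (2 * d) + j)
       = (if Q l j \<and> l' = l \<and> i = f l j then 1 else 0)"
proof -
  have W: "W \<in> carrier_mat (a * (2 * d)) (a * (2 * d))"
    and f_less: "\<forall>l<a. \<forall>j<d. Q l j \<longrightarrow> f l j < d"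
    and W_action: "\<forall>l<a. \<forall>j<d. W *\<^sub>v unit_vec (a * (2 * d)) (l * (2 * d) + j) =
           (if Q l j then unit_vec (a * (2 * d)) (l * (2 * d) + f l j)
            else unit_vec (a * (2 * d)) (l * (2 * d) + d + j))"
    using assms(1) unfolding select_oracle_def by blast+
  have row: "l' * (2 * d) + i < a * (2 * d)" and col: "l * (2 * d) + j < a * (2 * d)"
    using assms(2-5) by (simp_all add: mult_add_less_mult)
  show ?thesis
  proof (cases "Q l j")
    case True
    then have "f l j < 2 * d" using f_less assms(4,5) by fastforce
    then show ?thesis
      using index_eq_if_mult_unit_vec[OF W _ row col] W_action True assms(3-5)
      by (simp add: mult_add_eq_mult_add_iff)
  next
    case False
    have "d + j < 2 * d" using assms(5) by simp
    then show ?thesis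
      using index_eq_if_mult_unit_vec[OF W _ row col] W_action False assms(3-5)
      by (simp add: mult_add_eq_mult_add_iff add.assoc)
  qed
qed

lemma prepare_select_unprepare_index:
  fixes U W P :: "complex mat"
  assumes U: "U \<in> carrier_mat a a" and P: "P \<in> carrier_mat a a" and "0 < a"
    and W: "select_oracle a d Q f W"
    and "i < d" "j < d"
  shows "(kron_id U (2 * d) * W * kron_id P (2 * d)) $$ (i, j)
       = (\<Sum>l<a. if Q l j \<and> i = f l j then U $$ (0, l) * P $$ (l, 0) else 0)"
proof -
  have diagonal: "(\<Sum>l<a. U $$ (0, l') * W $$ (l' * (2 * d) + i, l * (2 * d) + j) * P $$ (l, 0))
      = (if Q l' j \<and> i = f l' j then U $$ (0, l') * P $$ (l', 0) else 0)" if "l' < a" for l'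
  proof -
    have "(\<Sum>l<a. U $$ (0, l') * W $$ (l' * (2 * d) + i, l * (2 * d) + j) * P $$ (l, 0))
        = (\<Sum>l<a. if l = l'
                 then (if Q l' j \<and> i = f l' j then U $$ (0, l') * P $$ (l', 0) else 0) else 0)"
      using that \<open>i < d\<close> \<open>j < d\<close>
      by (intro sum.cong) (auto simp: select_oracle_index[OF W])
    then show ?thesis using that by simp
  qed
  have "i < 2 * d" "j < 2 * d" using \<open>i < d\<close> \<open>j < d\<close> by simp_all
  moreover have "W \<in> carrier_mat (a * (2 * d)) (a * (2 * d))"
    using W unfolding select_oracle_def by blast
  ultimately show ?thesis using kron_id_sandwich_index[OF U _ P \<open>0 < a\<close>] diagonal by simp
qed

lemma prepare_unprepare_amplitude_product:
  fixes PREP UNPREP :: "complex mat" and x :: "nat \<Rightarrow> complex" and \<alpha> :: real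
  assumes PREP: "PREP \<in> carrier_mat N N" and UNPREP: "UNPREP \<in> carrier_mat N N" and "0 \<le> \<alpha>"
    and PREP_action: "PREP *\<^sub>v unit_vec N 0 =
          vec N (\<lambda>l. if l < s then csqrt (x l) / complex_of_real (sqrt \<alpha>) else 0)"
    and UNPREP_action: "mat_adjoint UNPREP *\<^sub>v unit_vec N 0 =
          vec N (\<lambda>l. if l < s then cnj (csqrt (x l)) / complex_of_real (sqrt \<alpha>) else 0)"
    and "l < N"
  shows "UNPREP $$ (0, l) * PREP $$ (l, 0) = (if l < s then x l / complex_of_real \<alpha> else 0)"
proof -
  have "0 < N" using \<open>l < N\<close> by simp
  have "PREP $$ (l, 0) = (if l < s then csqrt (x l) / complex_of_real (sqrt \<alpha>) else 0)"
    using mult_mat_vec_unit_vec_index[OF PREP \<open>l < N\<close> \<open>0 < N\<close>] PREP_action \<open>l < N\<close>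
    by simp
  moreover have "UNPREP $$ (0, l) = (if l < s then csqrt (x l) / complex_of_real (sqrt \<alpha>) else 0)"
    using mat_adjoint_mult_unit_vec_index[OF UNPREP \<open>l < N\<close> \<open>0 < N\<close>] UNPREP_action \<open>l < N\<close>
    by simp
  ultimately show ?thesis
    using \<open>0 \<le> \<alpha>\<close> by (simp add: power2_eq_square[symmetric] power_divide flip: of_real_power)
qed

theorem theorem1:
  fixes n s0 m :: nat
    and Aval :: "nat \<Rightarrow> complex"
    and S :: "nat \<Rightarrow> nat set"
    and c :: "nat \<Rightarrow> nat \<Rightarrow> nat"
    and A Oc PREP UNPREP :: "complex mat"
    and \<alpha> :: real
  assumes n_ge: "n \<ge> 1"
    and s0_ge: "s0 \<ge> 1"
    and Aval_nz: "\<forall>l<s0. Aval l \<noteq> 0"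
    and S_sub: "\<forall>l<s0. S l \<subseteq> {0..2^n-1}"
    and c_inj: "\<forall>l<s0. inj_on (c l) (S l)"
    and c_range: "\<forall>l<s0. c l ` S l \<subseteq> {0..2^n-1}"
    and distinct_pairs: "\<forall>l<s0. \<forall>l'<s0. \<forall>j\<in>S l. \<forall>j'\<in>S l'.
                           (c l j, j) = (c l' j', j') \<longrightarrow> l = l'"
    and A_carrier: "A \<in> carrier_mat (2^n) (2^n)"
    and A_def: "\<forall>i<2^n. \<forall>j<2^n.
                  A $$ (i,j) = (\<Sum>l<s0. \<Sum>j'\<in>S l.
                     Aval l * (ket (2^n) (c l j') $ i) * (ket (2^n) j' $ j))"
    and m_def: "m = nat \<lceil>log 2 (real s0)\<rceil>"
    and Oc_unitary: "unitary_mat (2^m * 2 * 2^n) Oc"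
    and Oc_action: "\<forall>l<2^m. \<forall>j<2^n.
          Oc *\<^sub>v ket (2^m * 2 * 2^n) (l * 2^(n+1) + 0 * 2^n + j) =
            (if l < s0 \<and> j \<in> S l
             then ket (2^m * 2 * 2^n) (l * 2^(n+1) + 0 * 2^n + c l j)
             else ket (2^m * 2 * 2^n) (l * 2^(n+1) + 1 * 2^n + j))"
    and alpha_def: "\<alpha> = (\<Sum>l<s0. cmod (Aval l))"
    and PREP_unitary: "unitary_mat (2^m) PREP"
    and UNPREP_unitary: "unitary_mat (2^m) UNPREP"
    and PREP_action: "PREP *\<^sub>v ket (2^m) 0 =
          vec (2^m) (\<lambda>l. if l < s0 then csqrt (Aval l) / complex_of_real (sqrt \<alpha>) else 0)"
    and UNPREP_action: "mat_adjoint UNPREP *\<^sub>v ket (2^m) 0 =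
          vec (2^m) (\<lambda>l. if l < s0 then cnj (csqrt (Aval l)) / complex_of_real (sqrt \<alpha>) else 0)"
  shows "mat_adjoint (anc_zero_iso (2^m * 2) (2^n))
           * (kron_id UNPREP (2^(n+1)) * Oc * kron_id PREP (2^(n+1)))
           * anc_zero_iso (2^m * 2) (2^n)
         = (1 / complex_of_real \<alpha>) \<cdot>\<^sub>m A"
proof -
  have dims: "2 ^ m * 2 * 2 ^ n = 2 ^ m * (2 * 2 ^ n :: nat)" "2 ^ (n + 1) = (2 * 2 ^ n :: nat)"
    by simp_all
  have "s0 \<le> 2 ^ m"
    using le_two_pow_nat_ceiling_log[OF s0_ge] m_def by simp
  have "0 \<le> \<alpha>"
    unfolding alpha_def by (simp add: sum_nonneg)
  have PREP: "PREP \<in> carrier_mat (2 ^ m) (2 ^ m)"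
    and UNPREP: "UNPREP \<in> carrier_mat (2 ^ m) (2 ^ m)"
    and Oc: "Oc \<in> carrier_mat (2 ^ m * (2 * 2 ^ n)) (2 ^ m * (2 * 2 ^ n))"
    using PREP_unitary UNPREP_unitary Oc_unitary by (simp_all add: unitary_mat_def dims)
  have index_range: "{0..2 ^ n - 1} = {..<2 ^ n :: nat}"
    by (rule atLeastAtMost_pred_eq_lessThan) simp
  have S_less: "j < 2 ^ n" "c l j < 2 ^ n" if "l < s0" "j \<in> S l" for l j
    using that S_sub c_range unfolding index_range by blast+
  have "select_oracle (2 ^ m) (2 ^ n) (\<lambda>l j. l < s0 \<and> j \<in> S l) c Oc"
    unfolding select_oracle_def using Oc Oc_action S_less by (simp add: dims)
  have S_finite: "\<forall>l<s0. finite (S l)"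
    using S_sub unfolding index_range by (meson finite_lessThan finite_subset)
  have entry: "(kron_id UNPREP (2 ^ (n + 1)) * Oc * kron_id PREP (2 ^ (n + 1))) $$ (i, j)
      = A $$ (i, j) / complex_of_real \<alpha>" if "i < 2 ^ n" "j < 2 ^ n" for i j
  proof -
    have "(kron_id UNPREP (2 ^ (n + 1)) * Oc * kron_id PREP (2 ^ (n + 1))) $$ (i, j)
        = (\<Sum>l<2 ^ m. if (l < s0 \<and> j \<in> S l) \<and> i = c l j
                        then UNPREP $$ (0, l) * PREP $$ (l, 0) else 0)"
      unfolding dims(2)
      by (rule prepare_select_unprepare_index[OF UNPREP PREP _ \<open>select_oracle _ _ _ _ Oc\<close> that])
        simp
    also have "\<dots> = (\<Sum>l<s0. if j \<in> S l \<and> i = c l j then Aval l / complex_of_real \<alpha> else 0)"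
      using \<open>s0 \<le> 2 ^ m\<close>
        prepare_unprepare_amplitude_product[OF PREP UNPREP \<open>0 \<le> \<alpha>\<close> PREP_action UNPREP_action]
      by (intro sum.mono_neutral_cong_right) auto
    also have "\<dots> = A $$ (i, j) / complex_of_real \<alpha>"
      using A_def that
      by (auto simp: dictionary_matrix_index[OF S_finite] sum_divide_distrib intro!: sum.cong)
    finally show ?thesis .
  qed
  have "kron_id UNPREP (2 ^ (n + 1)) * Oc * kron_id PREP (2 ^ (n + 1))
      \<in> carrier_mat (2 ^ m * 2 * 2 ^ n) (2 ^ m * 2 * 2 ^ n)"
    unfolding dims using kron_id_carrier[OF UNPREP] kron_id_carrier[OF PREP] Oc
    by (meson mult_carrier_mat)
  then show ?thesis
    using anc_zero_iso_compression[of _ "2 ^ m * 2" "2 ^ n"] entry A_carrier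
    by (auto intro!: eq_matI)
qed

end
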